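(* There is a universal constant $C>0$ such that the following holds. Let $\theta>0$, let $0<m<M<\infty$ and let $F$ be a finite measure on $[m,M]$. For every $0<\epsilon<\tfrac12$ there exists a discrete measure $F_\epsilon$ with $|F_\epsilon|=|F|$ and with fewer than $C\frac{M}{m}\log\frac{1}{\epsilon}$ support points such that \[ \|p_{\theta,F}-p_{\theta,F_\epsilon}\|_1<|F|\,\epsilon. \]
   Context: For $\theta>0$ and a finite measure $F$ on $(0,\infty)$, $p_{\theta,F}(x,y)=\int z^2\theta e^{-z(x+\theta y)}\,dF(z)$ for $(x,y)\in(0,\infty)^2$. $|F|$ denotes the total mass of $F$, and $\|\cdot\|_1$ is the $L^1$ norm with respect to Lebesgue measure on $(0,\infty)^2$. *)

theory Defs
  imports "HOL-Analysis.Analysis"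
begin

text \<open>Finite measures F on (0,infinity) are represented as finite Borel measures on the reals
  that give no mass outside (0,infinity).\<close>
definition p_mix :: "real \<Rightarrow> real measure \<Rightarrow> real \<Rightarrow> real \<Rightarrow> real" where
  "p_mix \<theta> F x y = (\<integral>z. z\<^sup>2 * \<theta> * exp (- z * (x + \<theta> * y)) \<partial>F)"

definition L1_dist :: "(real \<Rightarrow> real \<Rightarrow> real) \<Rightarrow> (real \<Rightarrow> real \<Rightarrow> real) \<Rightarrow> ennreal" where
  "L1_dist f g = (\<integral>\<^sup>+ xy. indicator ({0<..} \<times> {0<..}) xy *
      ennreal \<bar>f (fst xy) (snd xy) - g (fst xy) (snd xy)\<bar> \<partial>(lborel :: (real \<times> real) measure))"

definition fin_borel_measure :: "real measure \<Rightarrow> bool" where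
  "fin_borel_measure F \<longleftrightarrow> sets F = sets borel \<and> finite_measure F"

end

theory Submission
  imports Defs "HOL-Probability.Distributions"
begin

text \<open>
  With \<open>u = x + \<theta> y\<close> one has \<open>p\<^sub>\<theta>\<^sub>,\<^sub>F(x, y) = \<theta> \<integral> z\<^sup>2 exp(-z u) dF(z)\<close>, and the substitution
  \<open>(x, y) \<mapsto> u\<close> bounds the \<open>L\<^sup>1\<close> distance by \<open>\<integral>\<^sub>0\<^sup>\<infinity> u \<phi>(u) du\<close> for any majorant \<open>\<phi>(u)\<close> of
  \<open>|\<integral> z\<^sup>2 exp(-z u) d(F - F\<^sub>\<epsilon>)(z)|\<close>.

  First \<open>F\<close> is pushed down to a fine grid in \<open>[m, M]\<close>; the kernel is Lipschitz in \<open>z\<close> there with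
  constant \<open>(2M + M\<^sup>2u) exp(-m u)\<close>, so this costs little. Then \<open>[m, M]\<close> is cut into \<open>O(M/m)\<close>
  geometric blocks \<open>[a, 5a/4]\<close>, and by Caratheodory's argument the grid measure is replaced by
  one with at most \<open>K + 1\<close> atoms per block, plus one, having the same mass and the same moments
  \<open>s\<^sup>2 (s - a)\<^sup>i\<close>, \<open>i \<le> K\<close>, on every block. Hence both integrate \<open>s\<^sup>2\<close> times the degree \<open>K\<close> Taylor
  polynomial of \<open>exp(-s u)\<close> at \<open>a\<close> alike; the remainder is at most
  \<open>2a\<^sup>2 exp(-a u) (a u/4)\<^sup>K\<^sup>+\<^sup>1/(K+1)!\<close>, whose first moment \<open>2(K+2)/4\<^sup>K\<^sup>+\<^sup>1\<close> is independent of \<open>a\<close>,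
  so \<open>K \<approx> 2 log(8/\<epsilon>)\<close> suffices.
\<close>

section \<open>The kernel on a geometric block\<close>

lemma lipschitz_on_sq_exp:
  fixes m M u :: real
  assumes "0 \<le> m" "m \<le> M" "0 \<le> u"
  shows "((2 * M + M\<^sup>2 * u) * exp (- (m * u)))-lipschitz_on {m..M} (\<lambda>z. z\<^sup>2 * exp (- (z * u)))"
proof -
  have bound: "\<bar>z\<^sup>2 * exp (- (z * u)) - z'\<^sup>2 * exp (- (z' * u))\<bar> \<le> (2 * M + M\<^sup>2 * u) * exp (- (m * u)) * (z - z')"
    if z: "m \<le> z'" "z' \<le> z" "z \<le> M" for z z'
  proof -
    have exp_le: "exp (- (z * u)) \<le> exp (- (m * u))" "exp (- (z' * u)) \<le> exp (- (m * u))"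
      using assms z by (auto intro: mult_right_mono)
    have "\<bar>z\<^sup>2 - z'\<^sup>2\<bar> = (z - z') * (z + z')"
      using assms z by (simp add: power2_eq_square algebra_simps abs_of_nonneg mult_mono)
    also have "\<dots> \<le> (z - z') * (2 * M)"
      using assms z by (intro mult_left_mono) auto
    finally have sq: "\<bar>z\<^sup>2 - z'\<^sup>2\<bar> \<le> (z - z') * (2 * M)" .
    have "exp (- (z * u)) = exp (- (z' * u)) * exp (- ((z - z') * u))"
      by (simp add: algebra_simps flip: exp_add)
    moreover have "exp (- (z * u)) \<le> exp (- (z' * u))"
      using assms z by (simp add: mult_right_mono)
    ultimately have "\<bar>exp (- (z * u)) - exp (- (z' * u))\<bar> = exp (- (z' * u)) * (1 - exp (- ((z - z') * u)))"
      by (simp add: algebra_simps)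
    also have "\<dots> \<le> exp (- (m * u)) * ((z - z') * u)"
      using exp_le(2) exp_ge_add_one_self[of "- ((z - z') * u)"] assms z
      by (intro mult_mono) auto
    finally have ex: "\<bar>exp (- (z * u)) - exp (- (z' * u))\<bar> \<le> exp (- (m * u)) * ((z - z') * u)" .
    have "z\<^sup>2 * exp (- (z * u)) - z'\<^sup>2 * exp (- (z' * u))
        = (z\<^sup>2 - z'\<^sup>2) * exp (- (z * u)) + z'\<^sup>2 * (exp (- (z * u)) - exp (- (z' * u)))"
      by (simp add: algebra_simps)
    then have "\<bar>z\<^sup>2 * exp (- (z * u)) - z'\<^sup>2 * exp (- (z' * u))\<bar>
        \<le> \<bar>z\<^sup>2 - z'\<^sup>2\<bar> * exp (- (z * u)) + z'\<^sup>2 * \<bar>exp (- (z * u)) - exp (- (z' * u))\<bar>"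
      by (simp add: abs_mult abs_triangle_ineq[THEN order_trans])
    also have "\<dots> \<le> (z - z') * (2 * M) * exp (- (m * u)) + M\<^sup>2 * (exp (- (m * u)) * ((z - z') * u))"
      using assms z by (intro add_mono mult_mono sq exp_le ex power_mono) auto
    also have "\<dots> = (2 * M + M\<^sup>2 * u) * exp (- (m * u)) * (z - z')"
      by (simp add: algebra_simps)
    finally show ?thesis .
  qed
  show ?thesis
  proof (rule lipschitz_onI)
    fix z z' assume "z \<in> {m..M}" "z' \<in> {m..M}"
    then show "dist (z\<^sup>2 * exp (- (z * u))) (z'\<^sup>2 * exp (- (z' * u))) \<le> (2 * M + M\<^sup>2 * u) * exp (- (m * u)) * dist z z'"
      using bound[of z' z] bound[of z z'] by (cases "z' \<le> z") (auto simp: dist_real_def abs_minus_commute)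
  qed (use assms in auto)
qed

lemma taylor_exp_neg:
  fixes t :: real
  assumes "0 \<le> t"
  shows "\<bar>exp (- t) - (\<Sum>i\<le>K. (- t) ^ i / fact i)\<bar> \<le> t ^ Suc K / fact (Suc K)"
proof (cases "t = 0")
  case False
  then obtain \<tau> where "\<tau> < 0" "exp (- t) = (\<Sum>i<Suc K. exp 0 / fact i * (- t) ^ i) + exp \<tau> / fact (Suc K) * (- t) ^ Suc K"
    using Maclaurin_minus[of "- t" "Suc K" "\<lambda>_. exp" exp] assms by (auto intro: DERIV_exp)
  then have "\<bar>exp (- t) - (\<Sum>i\<le>K. (- t) ^ i / fact i)\<bar> = exp \<tau> / fact (Suc K) * t ^ Suc K"
    using assms by (simp add: lessThan_Suc_atMost abs_mult power_abs)
  also have "\<dots> \<le> 1 / fact (Suc K) * t ^ Suc K"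
    using \<open>\<tau> < 0\<close> assms by (intro mult_right_mono divide_right_mono) auto
  finally show ?thesis by simp
qed (simp add: power_0_left if_distrib[of "\<lambda>x. x / _"] cong: if_cong)

definition block_remainder :: "nat \<Rightarrow> real \<Rightarrow> real \<Rightarrow> real" where
  "block_remainder K a u = 2 * a\<^sup>2 * exp (- (a * u)) * ((a * u / 4) ^ Suc K / fact (Suc K))"

lemma sq_exp_taylor_on_block:
  fixes a s u :: real
  assumes a: "0 < a" and s: "a \<le> s" "s \<le> 5/4 * a" and u: "0 \<le> u"
  shows "\<bar>s\<^sup>2 * exp (- (s * u)) - (\<Sum>i\<le>K. exp (- (a * u)) * (- u) ^ i / fact i * (s\<^sup>2 * (s - a) ^ i))\<bar>
    \<le> block_remainder K a u"
proof -
  define t where "t = (s - a) * u"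
  have "(s - a) * u \<le> a / 4 * u"
    using s u by (intro mult_right_mono) auto
  then have t: "0 \<le> t" "t \<le> a * u / 4"
    using s u by (simp_all add: t_def)
  have taylor: "(\<Sum>i\<le>K. exp (- (a * u)) * (- u) ^ i / fact i * (s\<^sup>2 * (s - a) ^ i))
      = s\<^sup>2 * exp (- (a * u)) * (\<Sum>i\<le>K. (- t) ^ i / fact i)"
  proof -
    have "(- t) ^ i = (- u) ^ i * (s - a) ^ i" for i
      unfolding t_def by (simp add: power_mult_distrib[symmetric] algebra_simps)
    then show ?thesis
      by (simp add: sum_distrib_left mult_ac)
  qed
  have split: "s\<^sup>2 * exp (- (s * u)) = s\<^sup>2 * exp (- (a * u)) * exp (- t)"
    by (simp add: t_def algebra_simps flip: exp_add)
  have "\<bar>s\<^sup>2 * exp (- (s * u)) - (\<Sum>i\<le>K. exp (- (a * u)) * (- u) ^ i / fact i * (s\<^sup>2 * (s - a) ^ i))\<bar>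
      = s\<^sup>2 * exp (- (a * u)) * \<bar>exp (- t) - (\<Sum>i\<le>K. (- t) ^ i / fact i)\<bar>"
    unfolding taylor split right_diff_distrib[symmetric] abs_mult by simp
  also have "\<dots> \<le> block_remainder K a u"
    unfolding block_remainder_def
  proof (intro mult_mono)
    have "s\<^sup>2 \<le> (5/4 * a)\<^sup>2"
      using s a by (intro power_mono) auto
    then show "s\<^sup>2 \<le> 2 * a\<^sup>2"
      using zero_le_square[of a] unfolding power2_eq_square by linarith
    show "\<bar>exp (- t) - (\<Sum>i\<le>K. (- t) ^ i / fact i)\<bar> \<le> (a * u / 4) ^ Suc K / fact (Suc K)"
    proof (rule order_trans[OF taylor_exp_neg[OF t(1)]])
      show "t ^ Suc K / fact (Suc K) \<le> (a * u / 4) ^ Suc K / fact (Suc K)"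
        using t by (intro divide_right_mono power_mono) auto
    qed
  qed auto
  finally show ?thesis .
qed

lemma moment_matching_error:
  fixes anchor w0 w1 :: "real \<Rightarrow> real"
  assumes fin: "finite S0" "finite S1" and w: "\<forall>s\<in>S0. 0 \<le> w0 s" "\<forall>s\<in>S1. 0 \<le> w1 s"
    and blocks: "\<forall>s\<in>S0 \<union> S1. 0 < anchor s \<and> anchor s \<le> s \<and> s \<le> 5/4 * anchor s"
    and moments: "\<forall>a\<in>anchor ` (S0 \<union> S1). \<forall>i\<le>K.
      (\<Sum>s\<in>S1. w1 s * (if anchor s = a then s\<^sup>2 * (s - a) ^ i else 0)) =
      (\<Sum>s\<in>S0. w0 s * (if anchor s = a then s\<^sup>2 * (s - a) ^ i else 0))"
    and u: "0 \<le> u"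
  shows "\<bar>(\<Sum>s\<in>S0. w0 s * (s\<^sup>2 * exp (- (s * u)))) - (\<Sum>s\<in>S1. w1 s * (s\<^sup>2 * exp (- (s * u))))\<bar>
    \<le> (\<Sum>s\<in>S0. w0 s * block_remainder K (anchor s) u) + (\<Sum>s\<in>S1. w1 s * block_remainder K (anchor s) u)"
proof -
  define A where "A = anchor ` (S0 \<union> S1)"
  define c where "c a i = exp (- (a * u)) * (- u) ^ i / fact i" for a i
  \<comment> \<open>\<open>s\<^sup>2\<close> times the Taylor polynomial of \<open>exp (- (s * u))\<close> at \<open>a\<close>; matched moments integrate it alike.\<close>
  define P where "P a s = (\<Sum>i\<le>K. c a i * (s\<^sup>2 * (s - a) ^ i))" for a s
  define k where "k s = s\<^sup>2 * exp (- (s * u))" for s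
  have grouped: "(\<Sum>s\<in>T. w s * P (anchor s) s) =
      (\<Sum>a\<in>A. \<Sum>i\<le>K. c a i * (\<Sum>s\<in>T. w s * (if anchor s = a then s\<^sup>2 * (s - a) ^ i else 0)))"
    if "T \<subseteq> S0 \<union> S1" for T w
  proof -
    have "(\<Sum>s\<in>T. w s * P (anchor s) s) = (\<Sum>s\<in>T. \<Sum>a\<in>A. w s * (if anchor s = a then P a s else 0))"
      using that fin by (intro sum.cong) (auto simp: A_def if_distrib[of "\<lambda>x. w _ * x"] sum.delta' cong: if_cong)
    also have "\<dots> = (\<Sum>a\<in>A. \<Sum>s\<in>T. \<Sum>i\<le>K. c a i * (w s * (if anchor s = a then s\<^sup>2 * (s - a) ^ i else 0)))"
      by (subst sum.swap) (auto intro!: sum.cong simp: P_def sum_distrib_left mult_ac)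
    finally show ?thesis
      by (simp add: sum.swap[of _ T] sum_distrib_left)
  qed
  have "(\<Sum>s\<in>S0. w0 s * P (anchor s) s) = (\<Sum>s\<in>S1. w1 s * P (anchor s) s)"
    unfolding grouped[OF Un_upper1] grouped[OF Un_upper2]
    by (intro sum.cong refl) (use moments in \<open>auto simp: A_def\<close>)
  then have "(\<Sum>s\<in>S0. w0 s * k s) - (\<Sum>s\<in>S1. w1 s * k s)
      = (\<Sum>s\<in>S0. w0 s * (k s - P (anchor s) s)) - (\<Sum>s\<in>S1. w1 s * (k s - P (anchor s) s))"
    by (simp add: right_diff_distrib sum_subtractf)
  moreover have remainder: "\<bar>\<Sum>s\<in>T. w s * (k s - P (anchor s) s)\<bar> \<le> (\<Sum>s\<in>T. w s * block_remainder K (anchor s) u)"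
    if "T \<subseteq> S0 \<union> S1" "\<forall>s\<in>T. 0 \<le> w s" for T w
  proof (rule order_trans[OF sum_abs sum_mono])
    fix s assume "s \<in> T"
    then show "\<bar>w s * (k s - P (anchor s) s)\<bar> \<le> w s * block_remainder K (anchor s) u"
      using that blocks sq_exp_taylor_on_block[of "anchor s" s u K] u
      by (auto simp: abs_mult k_def P_def c_def intro!: mult_left_mono)
  qed
  ultimately have "\<bar>(\<Sum>s\<in>S0. w0 s * k s) - (\<Sum>s\<in>S1. w1 s * k s)\<bar>
      \<le> \<bar>\<Sum>s\<in>S0. w0 s * (k s - P (anchor s) s)\<bar> + \<bar>\<Sum>s\<in>S1. w1 s * (k s - P (anchor s) s)\<bar>"
    by (simp only: abs_triangle_ineq4)
  also have "\<dots> \<le> (\<Sum>s\<in>S0. w0 s * block_remainder K (anchor s) u) + (\<Sum>s\<in>S1. w1 s * block_remainder K (anchor s) u)"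
    using w by (intro add_mono remainder) auto
  finally show ?thesis
    by (simp only: k_def)
qed

text \<open>The left end \<open>m (5/4)\<^sup>b\<close> of the block \<open>[m (5/4)\<^sup>b, m (5/4)\<^sup>b\<^sup>+\<^sup>1)\<close> containing \<open>s\<close>.\<close>

definition geometric_anchor :: "real \<Rightarrow> real \<Rightarrow> real" where
  "geometric_anchor m s = m * (5/4) ^ (LEAST b. s < m * (5/4) ^ Suc b)"

lemma geometric_anchor_bounds:
  assumes m: "0 < m" and s: "m \<le> s"
  shows "0 < geometric_anchor m s" "geometric_anchor m s \<le> s" "s \<le> 5/4 * geometric_anchor m s"
proof -
  define b where "b = (LEAST b. s < m * (5/4) ^ Suc b)"
  obtain n where "s / m < (5/4) ^ n"
    using real_arch_pow[of "5/4 :: real" "s / m"] by auto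
  then have "s < m * (5/4) ^ n"
    using m by (simp add: pos_divide_less_eq mult.commute)
  also have "\<dots> \<le> m * (5/4) ^ Suc n"
    using m by (intro mult_left_mono) auto
  finally have "s < m * (5/4) ^ Suc n" .
  then have upper: "s < m * (5/4) ^ Suc b"
    unfolding b_def by (rule LeastI)
  have lower: "m * (5/4) ^ b \<le> s"
  proof (cases b)
    case (Suc b')
    then have "\<not> s < m * (5/4) ^ Suc b'"
      using not_less_Least[of b' "\<lambda>b. s < m * (5/4) ^ Suc b"] by (simp add: b_def)
    then show ?thesis
      using Suc by simp
  qed (use s in simp)
  have "geometric_anchor m s = m * (5/4) ^ b"
    unfolding geometric_anchor_def b_def ..
  then show "0 < geometric_anchor m s" "geometric_anchor m s \<le> s" "s \<le> 5/4 * geometric_anchor m s"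
    using m lower upper by (simp_all add: algebra_simps)
qed

lemma card_geometric_anchor_image:
  assumes m: "0 < m" and M: "m \<le> M" and S: "S \<subseteq> {m..M}"
  shows "finite (geometric_anchor m ` S)" "real (card (geometric_anchor m ` S)) \<le> 4 * M / m + 1"
proof -
  define B where "B = nat \<lceil>4 * M / m\<rceil>"
  have "1 + real B * (1/4) \<le> (1 + 1/4) ^ B"
    by (rule Bernoulli_inequality) simp
  moreover have "4 * M / m \<le> real B"
    unfolding B_def by (rule real_nat_ceiling_ge)
  ultimately have "m * (1 + M / m) \<le> m * (5/4) ^ B"
    using m by (intro mult_left_mono) auto
  then have "M < m * (5/4) ^ B"
    using m by (simp add: distrib_left)
  have "B \<noteq> 0"
  proof
    assume "B = 0"
    then show False
      using \<open>4 * M / m \<le> real B\<close> m M by (simp add: field_simps)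
  qed
  have sub: "geometric_anchor m ` S \<subseteq> (\<lambda>b. m * (5/4) ^ b) ` {..<B}"
  proof
    fix a assume "a \<in> geometric_anchor m ` S"
    then obtain s where s: "s \<in> {m..M}" "a = geometric_anchor m s"
      using S by blast
    have "s < m * (5/4) ^ Suc (B - 1)"
      using \<open>M < m * (5/4) ^ B\<close> \<open>B \<noteq> 0\<close> s by simp
    then have "(LEAST b. s < m * (5/4) ^ Suc b) < B"
      using Least_le[of "\<lambda>b. s < m * (5/4) ^ Suc b" "B - 1"] \<open>B \<noteq> 0\<close> by linarith
    then show "a \<in> (\<lambda>b. m * (5/4) ^ b) ` {..<B}"
      using s by (auto simp: geometric_anchor_def)
  qed
  then show "finite (geometric_anchor m ` S)"
    by (rule finite_subset) simp
  have "card (geometric_anchor m ` S) \<le> card ((\<lambda>b. m * (5/4) ^ b) ` {..<B})"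
    using sub by (intro card_mono) auto
  also have "\<dots> \<le> B"
    using card_image_le[of "{..<B}"] by simp
  finally have "card (geometric_anchor m ` S) \<le> B" .
  moreover have "real B \<le> 4 * M / m + 1"
    unfolding B_def using m M by (simp add: of_nat_nat)
  ultimately show "real (card (geometric_anchor m ` S)) \<le> 4 * M / m + 1"
    by linarith
qed

section \<open>Sparse reweighting\<close>

lemma exists_nontrivial_linear_relation:
  fixes v :: "'i \<Rightarrow> 'j \<Rightarrow> real"
  assumes "finite J" "finite I" "card J < card I"
  shows "\<exists>c. (\<exists>i\<in>I. c i \<noteq> 0) \<and> (\<forall>j\<in>J. (\<Sum>i\<in>I. c i * v i j) = 0)"
  using assms
proof (induction J arbitrary: I v rule: finite_induct)
  case empty
  then have "I \<noteq> {}" by auto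
  then show ?case by (intro exI[of _ "\<lambda>_. 1"]) auto
next
  case (insert j J)
  show ?case
  proof (cases "\<forall>i\<in>I. v i j = 0")
    case True
    with insert.IH[of I v] insert.prems insert.hyps show ?thesis
      by auto
  next
    case False
    then obtain i0 where i0: "i0 \<in> I" "v i0 j \<noteq> 0" by auto
    define I' where "I' = I - {i0}"
    have I: "(\<Sum>i\<in>I. g i) = g i0 + (\<Sum>i\<in>I'. g i)" for g :: "'i \<Rightarrow> real"
      using insert.prems i0 by (simp add: I'_def sum.remove)
    define v' where "v' i k = v i k - v i j / v i0 j * v i0 k" for i k
    have "finite I'" "card J < card I'"
      using insert i0 by (auto simp: I'_def)
    then obtain c' where c': "\<exists>i\<in>I'. c' i \<noteq> 0" "\<forall>k\<in>J. (\<Sum>i\<in>I'. c' i * v' i k) = 0"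
      using insert.IH by blast
    define c where "c = c'(i0 := - (\<Sum>i\<in>I'. c' i * v i j) / v i0 j)"
    have c_I': "(\<Sum>i\<in>I'. c i * g i) = (\<Sum>i\<in>I'. c' i * g i)" for g
      by (intro sum.cong) (auto simp: c_def I'_def)
    have "(\<Sum>i\<in>I. c i * v i k) = 0" if "k \<in> insert j J" for k
    proof -
      have "(\<Sum>i\<in>I'. c' i * v' i k) = (\<Sum>i\<in>I'. c' i * v i k - c' i * v i j * (v i0 k / v i0 j))"
        by (intro sum.cong) (auto simp: v'_def algebra_simps)
      also have "\<dots> = (\<Sum>i\<in>I'. c' i * v i k) - (\<Sum>i\<in>I'. c' i * v i j) * (v i0 k / v i0 j)"
        by (simp only: sum_subtractf sum_distrib_right)
      finally have "(\<Sum>i\<in>I'. c' i * v' i k) = \<dots>" .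
      moreover have "(\<Sum>i\<in>I'. c' i * v' i k) = 0"
        using c'(2) that i0(2) by (cases "k = j") (auto simp: v'_def)
      ultimately show ?thesis
        unfolding I c_I' using i0 by (simp add: c_def field_simps)
    qed
    moreover have "\<exists>i\<in>I. c i \<noteq> 0"
      using c'(1) by (auto simp: c_def I'_def)
    ultimately show ?thesis by blast
  qed
qed

lemma reweighting_drop_point:
  fixes f :: "'j \<Rightarrow> 'a \<Rightarrow> real" and w :: "'a \<Rightarrow> real"
  assumes S0: "finite S0" and J: "finite J" and card: "card J + 1 < card S0"
    and w: "\<forall>z\<in>S0. 0 \<le> w z"
  obtains z0 w' where "z0 \<in> S0" "\<forall>z\<in>S0 - {z0}. 0 \<le> w' z"
    "(\<Sum>z\<in>S0 - {z0}. w' z) = (\<Sum>z\<in>S0. w z)"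
    "\<forall>j\<in>J. (\<Sum>z\<in>S0 - {z0}. w' z * f j z) = (\<Sum>z\<in>S0. w z * f j z)"
proof -
  \<comment> \<open>The extra index \<open>None\<close> carries the constant test function, which keeps the total mass.\<close>
  define v where "v z = case_option 1 (\<lambda>j. f j z)" for z
  have "card (insert None (Some ` J)) < card S0"
    using J card by (simp add: card_image)
  then obtain c where c: "\<exists>z\<in>S0. c z \<noteq> 0" "\<forall>j\<in>insert None (Some ` J). (\<Sum>z\<in>S0. c z * v z j) = 0"
    using exists_nontrivial_linear_relation[of "insert None (Some ` J)" S0 v] J S0 by auto
  have c_sum: "(\<Sum>z\<in>S0. c z) = 0" and c_f: "\<forall>j\<in>J. (\<Sum>z\<in>S0. c z * f j z) = 0"
    using c(2) by (auto simp: v_def)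
  have "\<exists>z\<in>S0. 0 < c z"
  proof (rule ccontr)
    assume "\<not> ?thesis"
    moreover have "(\<Sum>z\<in>S0. - c z) = 0"
      using c_sum by (simp add: sum_negf)
    ultimately have "\<forall>z\<in>S0. - c z = 0"
      using sum_nonneg_eq_0_iff[OF S0, of "\<lambda>z. - c z"] by (simp add: not_less)
    then show False
      using c(1) by auto
  qed
  \<comment> \<open>Move along the relation until the first weight hits zero.\<close>
  define P where "P = {z\<in>S0. 0 < c z}"
  define t where "t = Min ((\<lambda>z. w z / c z) ` P)"
  have P: "finite P" "P \<noteq> {}"
    using S0 \<open>\<exists>z\<in>S0. 0 < c z\<close> by (auto simp: P_def)
  have "t \<in> (\<lambda>z. w z / c z) ` P"
    unfolding t_def using P by (intro Min_in) auto
  then obtain z0 where z0: "z0 \<in> P" "t = w z0 / c z0"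
    by blast
  have t_le: "t \<le> w z / c z" if "z \<in> P" for z
    unfolding t_def using P that by simp
  have "0 \<le> t"
    using z0 w by (auto simp: P_def)
  define w' where "w' z = w z - t * c z" for z
  have nonneg: "0 \<le> w' z" if "z \<in> S0" for z
  proof (cases "0 < c z")
    case True
    then show ?thesis
      using t_le[of z] that by (simp add: w'_def P_def pos_le_divide_eq)
  next
    case False
    then have "t * c z \<le> 0"
      using \<open>0 \<le> t\<close> by (simp add: mult_nonneg_nonpos not_less)
    moreover have "0 \<le> w z"
      using w that by blast
    ultimately show ?thesis
      by (simp add: w'_def)
  qed
  have drop: "(\<Sum>z\<in>S0 - {z0}. w' z * g z) = (\<Sum>z\<in>S0. w z * g z) - t * (\<Sum>z\<in>S0. c z * g z)" for g
  proof -
    have "w' z0 = 0"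
      using z0 by (simp add: w'_def P_def)
    moreover have "z0 \<in> S0"
      using z0 by (simp add: P_def)
    ultimately have "(\<Sum>z\<in>S0 - {z0}. w' z * g z) = (\<Sum>z\<in>S0. w' z * g z)"
      using sum.remove[OF S0, of z0 "\<lambda>z. w' z * g z"] by simp
    also have "\<dots> = (\<Sum>z\<in>S0. w z * g z - t * (c z * g z))"
      by (simp add: w'_def left_diff_distrib mult.assoc)
    finally show ?thesis
      by (simp add: sum_subtractf sum_distrib_left)
  qed
  show ?thesis
  proof (rule that[of z0 w'])
    show "z0 \<in> S0"
      using z0 by (simp add: P_def)
    show "\<forall>z\<in>S0 - {z0}. 0 \<le> w' z"
      using nonneg by blast
    show "(\<Sum>z\<in>S0 - {z0}. w' z) = (\<Sum>z\<in>S0. w z)"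
      using drop[of "\<lambda>_. 1"] c_sum by simp
    show "\<forall>j\<in>J. (\<Sum>z\<in>S0 - {z0}. w' z * f j z) = (\<Sum>z\<in>S0. w z * f j z)"
      using drop c_f by simp
  qed
qed

lemma exists_sparse_reweighting:
  fixes f :: "'j \<Rightarrow> 'a \<Rightarrow> real" and w :: "'a \<Rightarrow> real"
  assumes "finite S0" "finite J" "\<forall>z\<in>S0. 0 \<le> w z"
  shows "\<exists>S w'. S \<subseteq> S0 \<and> card S \<le> card J + 1 \<and> (\<forall>z\<in>S. 0 < w' z)
    \<and> (\<Sum>z\<in>S. w' z) = (\<Sum>z\<in>S0. w z) \<and> (\<forall>j\<in>J. (\<Sum>z\<in>S. w' z * f j z) = (\<Sum>z\<in>S0. w z * f j z))"
  using assms
proof (induction "card S0" arbitrary: S0 w rule: less_induct)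
  case less
  show ?case
  proof (cases "card S0 \<le> card J + 1")
    case True
    define S where "S = {z\<in>S0. 0 < w z}"
    have sums: "(\<Sum>z\<in>S. w z * g z) = (\<Sum>z\<in>S0. w z * g z)" for g
      using less.prems by (intro sum.mono_neutral_left) (auto simp: S_def)
    show ?thesis
    proof (intro exI[of _ S] exI[of _ w] conjI)
      show "S \<subseteq> S0" "\<forall>z\<in>S. 0 < w z"
        by (auto simp: S_def)
      then show "card S \<le> card J + 1"
        using True card_mono[OF less.prems(1)] by fastforce
      show "(\<Sum>z\<in>S. w z) = (\<Sum>z\<in>S0. w z)"
        using sums[of "\<lambda>_. 1"] by simp
      show "\<forall>j\<in>J. (\<Sum>z\<in>S. w z * f j z) = (\<Sum>z\<in>S0. w z * f j z)"
        using sums by blast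
    qed
  next
    case False
    then have "card J + 1 < card S0"
      by simp
    then obtain z0 w' where z0: "z0 \<in> S0" and w': "\<forall>z\<in>S0 - {z0}. 0 \<le> w' z"
      and sums: "(\<Sum>z\<in>S0 - {z0}. w' z) = (\<Sum>z\<in>S0. w z)"
        "\<forall>j\<in>J. (\<Sum>z\<in>S0 - {z0}. w' z * f j z) = (\<Sum>z\<in>S0. w z * f j z)"
      by (rule reweighting_drop_point[OF less.prems(1,2) _ less.prems(3)])
    have "card (S0 - {z0}) < card S0"
      using less.prems(1) z0 by (rule card_Diff1_less)
    moreover have "finite (S0 - {z0})"
      using less.prems(1) by simp
    ultimately have "\<exists>S w''. S \<subseteq> S0 - {z0} \<and> card S \<le> card J + 1 \<and> (\<forall>z\<in>S. 0 < w'' z)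
      \<and> (\<Sum>z\<in>S. w'' z) = (\<Sum>z\<in>S0 - {z0}. w' z)
      \<and> (\<forall>j\<in>J. (\<Sum>z\<in>S. w'' z * f j z) = (\<Sum>z\<in>S0 - {z0}. w' z * f j z))"
      by (rule less.hyps[OF _ _ less.prems(2) w'])
    then obtain S w'' where S: "S \<subseteq> S0 - {z0}" "card S \<le> card J + 1" "\<forall>z\<in>S. 0 < w'' z"
      "(\<Sum>z\<in>S. w'' z) = (\<Sum>z\<in>S0 - {z0}. w' z)"
      "\<forall>j\<in>J. (\<Sum>z\<in>S. w'' z * f j z) = (\<Sum>z\<in>S0 - {z0}. w' z * f j z)"
      by blast
    show ?thesis
    proof (intro exI[of _ S] exI[of _ w''] conjI)
      show "S \<subseteq> S0"
        using S(1) by blast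
      show "card S \<le> card J + 1" "\<forall>z\<in>S. 0 < w'' z"
        by (fact S(2), fact S(3))
      show "(\<Sum>z\<in>S. w'' z) = (\<Sum>z\<in>S0. w z)"
        using S(4) sums(1) by simp
      show "\<forall>j\<in>J. (\<Sum>z\<in>S. w'' z * f j z) = (\<Sum>z\<in>S0. w z * f j z)"
        using S(5) sums(2) by simp
    qed
  qed
qed

lemma sparse_moment_matching:
  fixes w0 :: "real \<Rightarrow> real" and K :: nat
  assumes m: "0 < m" "m \<le> M" and S0: "finite S0" "S0 \<subseteq> {m..M}" and w0: "\<forall>s\<in>S0. 0 \<le> w0 s"
  obtains S w where "S \<subseteq> S0" "\<forall>s\<in>S. 0 < w s" "(\<Sum>s\<in>S. w s) = (\<Sum>s\<in>S0. w0 s)"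
    "real (card S) \<le> (4 * M / m + 1) * (K + 1) + 1"
    "\<And>u. 0 \<le> u \<Longrightarrow> \<bar>(\<Sum>s\<in>S0. w0 s * (s\<^sup>2 * exp (- (s * u)))) - (\<Sum>s\<in>S. w s * (s\<^sup>2 * exp (- (s * u))))\<bar>
      \<le> (\<Sum>s\<in>S0. w0 s * block_remainder K (geometric_anchor m s) u)
        + (\<Sum>s\<in>S. w s * block_remainder K (geometric_anchor m s) u)"
proof -
  define anchor where "anchor = geometric_anchor m"
  define J where "J = anchor ` S0 \<times> {..K}"
  define f where "f = (\<lambda>(a, i) s. if anchor s = a then s\<^sup>2 * (s - a) ^ i else 0)"
  have "finite J"
    using S0(1) by (simp add: J_def)
  then obtain S w where S: "S \<subseteq> S0" "card S \<le> card J + 1" "\<forall>s\<in>S. 0 < w s" "(\<Sum>s\<in>S. w s) = (\<Sum>s\<in>S0. w0 s)"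
    and moments: "\<forall>j\<in>J. (\<Sum>s\<in>S. w s * f j s) = (\<Sum>s\<in>S0. w0 s * f j s)"
    using exists_sparse_reweighting[OF S0(1) _ w0, of J f] by blast
  show thesis
  proof (rule that[OF S(1,3,4)])
    have "real (card J) = real (card (anchor ` S0)) * (K + 1)"
      by (simp add: J_def card_cartesian_product algebra_simps)
    also have "\<dots> \<le> (4 * M / m + 1) * (K + 1)"
      using card_geometric_anchor_image[OF m S0(2)] by (intro mult_right_mono) (auto simp: anchor_def)
    finally show "real (card S) \<le> (4 * M / m + 1) * (K + 1) + 1"
      using S(2) by linarith
  next
    fix u :: real assume "0 \<le> u"
    have "\<forall>s\<in>S0 \<union> S. 0 < anchor s \<and> anchor s \<le> s \<and> s \<le> 5/4 * anchor s"
      using S(1) S0(2) geometric_anchor_bounds[OF m(1)] by (auto simp: anchor_def)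
    moreover have "\<forall>a\<in>anchor ` (S0 \<union> S). \<forall>i\<le>K.
        (\<Sum>s\<in>S. w s * (if anchor s = a then s\<^sup>2 * (s - a) ^ i else 0)) =
        (\<Sum>s\<in>S0. w0 s * (if anchor s = a then s\<^sup>2 * (s - a) ^ i else 0))"
      using moments S(1) by (auto simp: J_def f_def)
    ultimately show "\<bar>(\<Sum>s\<in>S0. w0 s * (s\<^sup>2 * exp (- (s * u)))) - (\<Sum>s\<in>S. w s * (s\<^sup>2 * exp (- (s * u))))\<bar>
      \<le> (\<Sum>s\<in>S0. w0 s * block_remainder K (geometric_anchor m s) u)
        + (\<Sum>s\<in>S. w s * block_remainder K (geometric_anchor m s) u)"
      using moment_matching_error[OF S0(1) _ w0, of S w anchor K u] S S0(1) \<open>0 \<le> u\<close>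
      by (auto simp: anchor_def finite_subset less_imp_le)
  qed
qed

section \<open>Discretising a finite measure\<close>

definition discrete_measure :: "real set \<Rightarrow> (real \<Rightarrow> real) \<Rightarrow> real measure" where
  "discrete_measure S w = distr (point_measure S (\<lambda>z. ennreal (w z))) borel (\<lambda>z. z)"

lemma sets_discrete_measure [simp]: "sets (discrete_measure S w) = sets borel"
  by (simp add: discrete_measure_def)

lemma space_discrete_measure [simp]: "space (discrete_measure S w) = UNIV"
  by (simp add: discrete_measure_def)

lemma emeasure_discrete_measure:
  assumes "finite S" "\<forall>z\<in>S. 0 \<le> w z" "A \<in> sets borel"
  shows "emeasure (discrete_measure S w) A = ennreal (\<Sum>z\<in>S \<inter> A. w z)"
proof -
  have "emeasure (discrete_measure S w) A = emeasure (point_measure S (\<lambda>z. ennreal (w z))) (S \<inter> A)"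
    unfolding discrete_measure_def using assms(3)
    by (subst emeasure_distr) (auto simp: space_point_measure Int_commute vimage_def)
  also have "\<dots> = ennreal (\<Sum>z\<in>S \<inter> A. w z)"
    using assms by (subst emeasure_point_measure_finite) (auto intro: sum_ennreal)
  finally show ?thesis .
qed

lemma fin_borel_measure_discrete_measure:
  assumes "finite S" "\<forall>z\<in>S. 0 \<le> w z"
  shows "fin_borel_measure (discrete_measure S w)"
  unfolding fin_borel_measure_def
  using emeasure_discrete_measure[OF assms, of UNIV] by (auto intro!: finite_measureI)

lemma integral_discrete_measure:
  assumes "finite S" "\<forall>z\<in>S. 0 \<le> w z" "g \<in> borel_measurable borel"
  shows "(\<integral>z. g z \<partial>discrete_measure S w) = (\<Sum>z\<in>S. w z * g z)"
  using assms unfolding discrete_measure_def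
  by (simp add: integral_distr lebesgue_integral_point_measure_finite)

lemma integral_comp_finite_range:
  fixes r :: "'a \<Rightarrow> real" and g :: "real \<Rightarrow> real"
  assumes "finite_measure F" "r \<in> borel_measurable F" "finite S" "AE z in F. r z \<in> S"
    and [measurable]: "g \<in> borel_measurable borel"
  shows "integrable F (\<lambda>z. g (r z))"
    and "(\<integral>z. g (r z) \<partial>F) = (\<Sum>s\<in>S. measure F (r -` {s} \<inter> space F) * g s)"
proof -
  interpret finite_measure F by fact
  have level_sets: "r -` {s} \<inter> space F \<in> sets F" for s
    using assms(2) by (simp add: measurable_sets_borel)
  define h where "h z = (\<Sum>s\<in>S. indicator (r -` {s} \<inter> space F) z * g s)" for z
  have h: "has_bochner_integral F h (\<Sum>s\<in>S. measure F (r -` {s} \<inter> space F) * g s)"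
    unfolding h_def using level_sets
    by (intro has_bochner_integral_sum has_bochner_integral_mult_left has_bochner_integral_real_indicator)
      (auto simp: emeasure_eq_measure)
  have ae: "AE z in F. g (r z) = h z"
    using assms(4)
  proof (rule AE_mp, intro AE_I2 impI)
    fix z assume "z \<in> space F" "r z \<in> S"
    then show "g (r z) = h z"
      using assms(3) by (simp add: h_def indicator_def sum.delta[of S "r z"] if_distrib cong: if_cong)
  qed
  have "(\<lambda>z. g (r z)) \<in> borel_measurable F"
    using assms(2) by measurable
  then have "has_bochner_integral F (\<lambda>z. g (r z)) (\<Sum>s\<in>S. measure F (r -` {s} \<inter> space F) * g s)"
    using h has_bochner_integral_cong_AE[OF _ borel_measurable_has_bochner_integral[OF h] ae] by simp
  then show "integrable F (\<lambda>z. g (r z))"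
    and "(\<integral>z. g (r z) \<partial>F) = (\<Sum>s\<in>S. measure F (r -` {s} \<inter> space F) * g s)"
    by (auto intro: integrable.intros dest: has_bochner_integral_integral_eq)
qed

lemma grid_subset:
  assumes "0 < \<delta>"
  shows "(\<lambda>j. m + \<delta> * of_int j) ` {0..\<lfloor>(M - m) / \<delta>\<rfloor>} \<subseteq> {m..M}"
proof
  fix s assume "s \<in> (\<lambda>j. m + \<delta> * of_int j) ` {0..\<lfloor>(M - m) / \<delta>\<rfloor>}"
  then obtain j where j: "0 \<le> j" "of_int j \<le> (M - m) / \<delta>" "s = m + \<delta> * of_int j"
    by (auto simp: le_floor_iff)
  then show "s \<in> {m..M}"
    using assms by (simp add: pos_le_divide_eq mult.commute)
qed

lemma grid_round:
  assumes "0 < \<delta>" "z \<in> {m..M}"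
  defines "r \<equiv> m + \<delta> * of_int \<lfloor>(z - m) / \<delta>\<rfloor>"
  shows "r \<in> (\<lambda>j. m + \<delta> * of_int j) ` {0..\<lfloor>(M - m) / \<delta>\<rfloor>}" and "r \<le> z" and "z - r < \<delta>"
proof -
  have "(z - m) / \<delta> \<le> (M - m) / \<delta>"
    using assms by (simp add: divide_right_mono)
  then have "\<lfloor>(z - m) / \<delta>\<rfloor> \<in> {0..\<lfloor>(M - m) / \<delta>\<rfloor>}"
    using assms by (auto intro: floor_mono)
  then show "r \<in> (\<lambda>j. m + \<delta> * of_int j) ` {0..\<lfloor>(M - m) / \<delta>\<rfloor>}"
    unfolding r_def by blast
  show "r \<le> z" and "z - r < \<delta>"
    using floor_divide_lower[OF assms(1), of "z - m"] floor_divide_upper[OF assms(1), of "z - m"]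
    unfolding r_def by (simp_all add: algebra_simps)
qed

lemma grid_discretization:
  fixes F :: "real measure"
  assumes F: "fin_borel_measure F" and supp: "emeasure F (- {m..M}) = 0" and \<delta>: "0 < \<delta>"
  obtains S0 w where "finite S0" "S0 \<subseteq> {m..M}" "\<forall>s\<in>S0. 0 \<le> w s" "(\<Sum>s\<in>S0. w s) = measure F UNIV"
    "\<And>g L. L-lipschitz_on {m..M} g \<Longrightarrow> g \<in> borel_measurable borel \<Longrightarrow>
       \<bar>(\<integral>z. g z \<partial>F) - (\<Sum>s\<in>S0. w s * g s)\<bar> \<le> \<delta> * L * measure F UNIV"
proof
  interpret finite_measure F
    using F by (simp add: fin_borel_measure_def)
  have sets_F [measurable_cong]: "sets F = sets borel" and space_F: "space F = UNIV"
    using F sets_eq_imp_space_eq[of F borel] by (auto simp: fin_borel_measure_def)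
  define r where "r z = m + \<delta> * of_int \<lfloor>(z - m) / \<delta>\<rfloor>" for z
  define S0 where "S0 = (\<lambda>j. m + \<delta> * of_int j) ` {0..\<lfloor>(M - m) / \<delta>\<rfloor>}"
  define w where "w s = measure F (r -` {s} \<inter> space F)" for s
  have "- {m..M} \<in> null_sets F"
    using supp by (simp add: null_sets_def sets_F)
  then have AE_supp: "AE z in F. z \<in> {m..M}"
    by (rule AE_I') auto
  have r_meas: "r \<in> borel_measurable F"
    unfolding r_def by measurable
  have AE_S0: "AE z in F. r z \<in> S0"
    using AE_supp by eventually_elim (use grid_round[OF \<delta>] in \<open>auto simp: r_def S0_def\<close>)
  have fin: "finite S0"
    by (simp add: S0_def)
  have discretize: "integrable F (\<lambda>z. g (r z))" "(\<integral>z. g (r z) \<partial>F) = (\<Sum>s\<in>S0. w s * g s)"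
    if "g \<in> borel_measurable borel" for g
    using integral_comp_finite_range[OF finite_measure_axioms r_meas fin AE_S0 that] by (simp_all add: w_def)
  show "finite S0"
    by (fact fin)
  show "S0 \<subseteq> {m..M}"
    unfolding S0_def using \<delta> by (rule grid_subset)
  show "\<forall>s\<in>S0. 0 \<le> w s"
    by (simp add: w_def)
  show "(\<Sum>s\<in>S0. w s) = measure F UNIV"
    using discretize(2)[of "\<lambda>_. 1"] by (simp add: S0_def space_F)
  fix g :: "real \<Rightarrow> real" and L :: real
  assume lip: "L-lipschitz_on {m..M} g" and [measurable]: "g \<in> borel_measurable borel"
  have close: "AE z in F. \<bar>g z - g (r z)\<bar> \<le> \<delta> * L"
    using AE_supp
  proof eventually_elim
    case (elim z)
    have "r z \<in> {m..M}" "dist z (r z) \<le> \<delta>"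
      using grid_round[OF \<delta> elim] grid_subset[OF \<delta>, of m M] by (auto simp: r_def dist_real_def)
    then show ?case
      using lipschitz_onD[OF lip elim, of "r z"] lipschitz_on_nonneg[OF lip]
      by (simp add: dist_real_def mult.commute order_trans[OF _ mult_left_mono])
  qed
  have g_int: "integrable F g"
  proof (rule integrable_const_bound[where B="\<bar>g m\<bar> + L * (M - m)"])
    show "AE z in F. norm (g z) \<le> \<bar>g m\<bar> + L * (M - m)"
      using AE_supp
    proof eventually_elim
      case (elim z)
      then have "dist (g z) (g m) \<le> L * dist z m"
        using lipschitz_onD[OF lip] by auto
      moreover have "L * dist z m \<le> L * (M - m)"
        using elim lipschitz_on_nonneg[OF lip] by (intro mult_left_mono) (auto simp: dist_real_def)
      ultimately show ?case
        by (simp add: dist_real_def)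
    qed
  qed simp
  have "\<bar>(\<integral>z. g z \<partial>F) - (\<Sum>s\<in>S0. w s * g s)\<bar> = \<bar>\<integral>z. g z - g (r z) \<partial>F\<bar>"
    using g_int discretize[of g] by (simp add: mult.commute)
  also have "\<dots> \<le> (\<integral>z. \<delta> * L \<partial>F)"
    using g_int discretize(1)[of g] close
    by (intro integral_abs_bound_integral[THEN order_trans] integral_mono_AE) auto
  also have "\<dots> = \<delta> * L * measure F UNIV"
    by (simp add: space_F)
  finally show "\<bar>(\<integral>z. g z \<partial>F) - (\<Sum>s\<in>S0. w s * g s)\<bar> \<le> \<delta> * L * measure F UNIV" .
qed

section \<open>First moments of the error majorants\<close>

lemma has_bochner_integral_power_times_exp:
  fixes a :: real
  assumes a: "0 < a"
  shows "has_bochner_integral lborel (\<lambda>u. indicator {0..} u * (u ^ k * exp (- (a * u)))) (fact k / a ^ Suc k)"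
proof -
  have "has_bochner_integral lborel (erlang_density k a) 1"
    using nn_integral_erlang_ith_moment[OF a, of k 0] a
    by (intro has_bochner_integral_nn_integral) (auto simp: erlang_density_def)
  then have "has_bochner_integral lborel (\<lambda>u. fact k / a ^ Suc k * erlang_density k a u) (fact k / a ^ Suc k)"
    using has_bochner_integral_mult_right by fastforce
  moreover have "fact k / a ^ Suc k * erlang_density k a u = indicator {0..} u * (u ^ k * exp (- (a * u)))" for u
    using a by (simp add: erlang_density_def indicator_def)
  ultimately show ?thesis by simp
qed

lemma has_bochner_integral_block_remainder:
  assumes a: "0 < a"
  shows "has_bochner_integral lborel (\<lambda>u. indicator {0..} u * (u * block_remainder K a u))
           (2 * (real K + 2) / 4 ^ Suc K)"
proof -
  define c where "c = 2 * a\<^sup>2 * (a / 4) ^ Suc K / fact (Suc K)"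
  have "indicator {0..} u * (u * block_remainder K a u) = c * (indicator {0..} u * (u ^ (K + 2) * exp (- (a * u))))"
    for u :: real
    by (simp add: block_remainder_def c_def power_mult_distrib power_divide mult_ac)
  moreover have "c * (fact (K + 2) / a ^ Suc (K + 2)) = 2 * (real K + 2) / 4 ^ Suc K"
  proof -
    have f: "fact (K + 2) = (real K + 2) * fact (Suc K)" and p: "a ^ Suc (K + 2) = a\<^sup>2 * a ^ Suc K"
      by (simp_all add: algebra_simps power2_eq_square)
    have "2 * q * (p / w) / f * (k * f / (q * p)) = 2 * k / w" if "q \<noteq> 0" "p \<noteq> 0" "f \<noteq> 0"
      for q p f w k :: real
      using that by (simp add: field_simps)
    then show ?thesis
      unfolding c_def f p power_divide using a by simp (simp add: field_simps)
  qed
  ultimately show ?thesis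
    using has_bochner_integral_mult_right[OF has_bochner_integral_power_times_exp[OF a, of "K + 2"], of c]
    by (simp only:)
qed

lemma has_bochner_integral_weighted_block_remainders:
  assumes "finite S" "\<forall>s\<in>S. 0 < anchor s"
  shows "has_bochner_integral lborel
      (\<lambda>u. indicator {0..} u * (u * (\<Sum>s\<in>S. w s * block_remainder K (anchor s) u)))
      ((\<Sum>s\<in>S. w s) * (2 * (real K + 2) / 4 ^ Suc K))"
proof -
  have "(\<lambda>u. indicator {0..} u * (u * (\<Sum>s\<in>S. w s * block_remainder K (anchor s) u))) =
      (\<lambda>u. \<Sum>s\<in>S. w s * (indicator {0..} u * (u * block_remainder K (anchor s) u)))"
    by (simp add: fun_eq_iff sum_distrib_left mult_ac)
  moreover have "has_bochner_integral lborel
      (\<lambda>u. \<Sum>s\<in>S. w s * (indicator {0..} u * (u * block_remainder K (anchor s) u)))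
      (\<Sum>s\<in>S. w s * (2 * (real K + 2) / 4 ^ Suc K))"
    using assms by (intro has_bochner_integral_sum has_bochner_integral_mult_right has_bochner_integral_block_remainder) auto
  ultimately show ?thesis
    by (simp only: sum_distrib_right)
qed

lemma has_bochner_integral_lipschitz_weight:
  fixes m M :: real
  assumes m: "0 < m"
  shows "has_bochner_integral lborel (\<lambda>u. indicator {0..} u * (u * ((2 * M + M\<^sup>2 * u) * exp (- (m * u)))))
           (2 * M / m\<^sup>2 + 2 * M\<^sup>2 / m ^ 3)"
proof -
  have "indicator {0..} u * (u * ((2 * M + M\<^sup>2 * u) * exp (- (m * u)))) =
      2 * M * (indicator {0..} u * (u ^ 1 * exp (- (m * u)))) + M\<^sup>2 * (indicator {0..} u * (u ^ 2 * exp (- (m * u))))"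
    for u :: real by (simp add: algebra_simps power2_eq_square)
  moreover have "2 * M * (fact 1 / m ^ Suc 1) + M\<^sup>2 * (fact 2 / m ^ Suc 2) = 2 * M / m\<^sup>2 + 2 * M\<^sup>2 / m ^ 3"
    by (simp add: numeral_eq_Suc)
  ultimately show ?thesis
    using has_bochner_integral_add[OF
        has_bochner_integral_mult_right[OF has_bochner_integral_power_times_exp[OF m, of 1], of "2 * M"]
        has_bochner_integral_mult_right[OF has_bochner_integral_power_times_exp[OF m, of 2], of "M\<^sup>2"]]
    by simp
qed

lemma has_bochner_integral_kernel_majorant:
  fixes m M \<delta> :: real and anchor w0 w1 :: "real \<Rightarrow> real"
  assumes m: "0 < m" and S: "finite S0" "finite S1" "\<forall>s\<in>S0 \<union> S1. 0 < anchor s"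
  shows "has_bochner_integral lborel
      (\<lambda>u. indicator {0..} u * (u * (\<delta> * ((2 * M + M\<^sup>2 * u) * exp (- (m * u)))
        + (\<Sum>s\<in>S0. w0 s * block_remainder K (anchor s) u) + (\<Sum>s\<in>S1. w1 s * block_remainder K (anchor s) u))))
      (\<delta> * (2 * M / m\<^sup>2 + 2 * M\<^sup>2 / m ^ 3)
        + ((\<Sum>s\<in>S0. w0 s) + (\<Sum>s\<in>S1. w1 s)) * (2 * (real K + 2) / 4 ^ Suc K))"
proof -
  let ?lip = "\<lambda>u. (2 * M + M\<^sup>2 * u) * exp (- (m * u))"
  let ?rem = "\<lambda>T v u. \<Sum>s\<in>T. v s * block_remainder K (anchor s) u"
  have "has_bochner_integral lborel (\<lambda>u. \<delta> * (indicator {0..} u * (u * ?lip u))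
        + indicator {0..} u * (u * ?rem S0 w0 u) + indicator {0..} u * (u * ?rem S1 w1 u))
      (\<delta> * (2 * M / m\<^sup>2 + 2 * M\<^sup>2 / m ^ 3) + (\<Sum>s\<in>S0. w0 s) * (2 * (real K + 2) / 4 ^ Suc K)
        + (\<Sum>s\<in>S1. w1 s) * (2 * (real K + 2) / 4 ^ Suc K))"
    using S by (intro has_bochner_integral_add has_bochner_integral_mult_right
        has_bochner_integral_lipschitz_weight[OF m] has_bochner_integral_weighted_block_remainders) auto
  moreover have "(\<lambda>u. indicator {0..} u * (u * (\<delta> * ?lip u + ?rem S0 w0 u + ?rem S1 w1 u))) =
      (\<lambda>u. \<delta> * (indicator {0..} u * (u * ?lip u))
        + indicator {0..} u * (u * ?rem S0 w0 u) + indicator {0..} u * (u * ?rem S1 w1 u))"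
    by (simp add: fun_eq_iff distrib_left mult_ac)
  ultimately show ?thesis
    by (simp only: distrib_right add.assoc)
qed

section \<open>The \<open>L\<^sup>1\<close> distance of two mixtures\<close>

lemma nn_integral_quadrant_comp_linear:
  fixes \<phi> :: "real \<Rightarrow> ennreal"
  assumes [measurable]: "\<phi> \<in> borel_measurable borel" and \<theta>: "0 < \<theta>"
  shows "(\<integral>\<^sup>+xy. indicator ({0<..} \<times> {0<..}) xy * (ennreal \<theta> * \<phi> (fst xy + \<theta> * snd xy)) \<partial>lborel)
       = (\<integral>\<^sup>+u. indicator {0<..} u * (ennreal u * \<phi> u) \<partial>lborel)"
proof -
  have inner: "(\<integral>\<^sup>+y. indicator ({0<..} \<times> {0<..}) (x, y) * (ennreal \<theta> * \<phi> (x + \<theta> * y)) \<partial>lborel)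
      = (\<integral>\<^sup>+u. indicator {(x, u). 0 < x \<and> x < u} (x, u) * \<phi> u \<partial>lborel)" for x :: real
  proof (cases "0 < x")
    case True
    have "(\<integral>\<^sup>+u. indicator {x<..} u * \<phi> u \<partial>lborel)
        = ennreal \<theta> * (\<integral>\<^sup>+y. indicator {x<..} (x + \<theta> * y) * \<phi> (x + \<theta> * y) \<partial>lborel)"
      using \<theta> by (subst nn_integral_real_affine[where c=\<theta> and t=x]) auto
    also have "\<dots> = (\<integral>\<^sup>+y. indicator ({0<..} \<times> {0<..}) (x, y) * (ennreal \<theta> * \<phi> (x + \<theta> * y)) \<partial>lborel)"
      using \<theta> True by (subst nn_integral_cmult[symmetric])
        (auto intro!: nn_integral_cong simp: zero_less_mult_iff split: split_indicator)
    finally show ?thesis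
      using True by (simp add: indicator_def)
  qed simp
  have [measurable]: "{0<..} \<times> {0<..} \<in> sets (borel :: (real \<times> real) measure)"
    by (intro borel_open open_Times) auto
  have [measurable]: "(\<lambda>xy :: real \<times> real. fst xy + \<theta> * snd xy) \<in> borel_measurable borel"
    by (intro borel_measurable_continuous_onI continuous_intros)
  have region [measurable]: "{(x :: real, u :: real). 0 < x \<and> x < u} \<in> sets borel"
    unfolding case_prod_unfold by (intro borel_open open_Collect_conj open_Collect_less continuous_intros)
  have "(\<integral>\<^sup>+xy. indicator ({0<..} \<times> {0<..}) xy * (ennreal \<theta> * \<phi> (fst xy + \<theta> * snd xy)) \<partial>lborel)
      = (\<integral>\<^sup>+x. \<integral>\<^sup>+y. indicator ({0<..} \<times> {0<..}) (x, y) * (ennreal \<theta> * \<phi> (x + \<theta> * y)) \<partial>lborel \<partial>lborel)"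
    unfolding lborel_prod[symmetric]
    by (subst lborel.nn_integral_fst[symmetric]) (auto simp: lborel_prod)
  also have "\<dots> = (\<integral>\<^sup>+x. \<integral>\<^sup>+u. indicator {(x, u). 0 < x \<and> x < u} (x, u) * \<phi> u \<partial>lborel \<partial>lborel)"
    by (simp only: inner)
  also have "\<dots> = (\<integral>\<^sup>+u. \<integral>\<^sup>+x. indicator {(x, u). 0 < x \<and> x < u} (x, u) * \<phi> u \<partial>lborel \<partial>lborel)"
  proof -
    have "{(x, u). 0 < x \<and> x < u} \<in> sets (lborel \<Otimes>\<^sub>M lborel :: (real \<times> real) measure)"
      using region by (metis borel_prod sets_pair_measure_cong sets_lborel)
    then have meas: "(\<lambda>(x, u). indicator {(x :: real, u :: real). 0 < x \<and> x < u} (x, u) * \<phi> u)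
        \<in> borel_measurable (lborel \<Otimes>\<^sub>M lborel)"
      by (auto simp: case_prod_unfold)
    show ?thesis
      using lborel_pair.Fubini'[OF meas] by simp
  qed
  also have "\<dots> = (\<integral>\<^sup>+u. indicator {0<..} u * (ennreal u * \<phi> u) \<partial>lborel)"
  proof (intro nn_integral_cong)
    fix u :: real
    have "(\<integral>\<^sup>+x. indicator {(x, u). 0 < x \<and> x < u} (x, u) * \<phi> u \<partial>lborel) = \<phi> u * emeasure lborel {0<..<u}"
      by (subst nn_integral_cmult_indicator[symmetric]) (auto intro!: nn_integral_cong simp: mult.commute split: split_indicator)
    then show "(\<integral>\<^sup>+x. indicator {(x, u). 0 < x \<and> x < u} (x, u) * \<phi> u \<partial>lborel) = indicator {0<..} u * (ennreal u * \<phi> u)"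
      by (auto simp: mult.commute split: split_indicator)
  qed
  finally show ?thesis .
qed

lemma L1_dist_le_first_moment:
  fixes f g :: "real \<Rightarrow> real \<Rightarrow> real" and \<phi> :: "real \<Rightarrow> real"
  assumes \<theta>: "0 < \<theta>" and [measurable]: "\<phi> \<in> borel_measurable borel"
    and bound: "\<And>x y. 0 < x \<Longrightarrow> 0 < y \<Longrightarrow> \<bar>f x y - g x y\<bar> \<le> \<theta> * \<phi> (x + \<theta> * y)"
    and I: "has_bochner_integral lborel (\<lambda>u. indicator {0..} u * (u * \<phi> u)) I"
  shows "L1_dist f g \<le> ennreal I"
proof -
  have \<phi>_nonneg: "0 \<le> \<phi> u" if "0 < u" for u
  proof -
    have "0 \<le> \<theta> * \<phi> u"
      using bound[of "u / 2" "u / (2 * \<theta>)"] \<theta> that by (simp add: order_trans[OF abs_ge_zero])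
    then show ?thesis
      using \<theta> by (simp add: zero_le_mult_iff)
  qed
  have "L1_dist f g \<le> (\<integral>\<^sup>+xy. indicator ({0<..} \<times> {0<..}) xy * (ennreal \<theta> * ennreal (\<phi> (fst xy + \<theta> * snd xy))) \<partial>lborel)"
    unfolding L1_dist_def
  proof (intro nn_integral_mono)
    fix xy :: "real \<times> real"
    show "indicator ({0<..} \<times> {0<..}) xy * ennreal \<bar>f (fst xy) (snd xy) - g (fst xy) (snd xy)\<bar>
        \<le> indicator ({0<..} \<times> {0<..}) xy * (ennreal \<theta> * ennreal (\<phi> (fst xy + \<theta> * snd xy)))"
      using bound[of "fst xy" "snd xy"] \<theta>
      by (auto simp: indicator_def mem_Times_iff ennreal_mult'[symmetric] intro: ennreal_leI)
  qed
  also have "\<dots> = (\<integral>\<^sup>+u. indicator {0<..} u * (ennreal u * ennreal (\<phi> u)) \<partial>lborel)"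
    by (rule nn_integral_quadrant_comp_linear) (use \<theta> in auto)
  also have "\<dots> = (\<integral>\<^sup>+u. ennreal (indicator {0..} u * (u * \<phi> u)) \<partial>lborel)"
    by (intro nn_integral_cong) (auto simp: indicator_def ennreal_mult')
  also have "\<dots> = ennreal I"
  proof -
    have "0 \<le> indicator {0..} u * (u * \<phi> u)" for u
      using \<phi>_nonneg[of u] by (cases "0 < u") (auto simp: indicator_def)
    then have "AE u in lborel. 0 \<le> indicator {0..} u * (u * \<phi> u)"
      by simp
    then show ?thesis
      using I by (simp add: nn_integral_eq_integral has_bochner_integral_iff)
  qed
  finally show ?thesis .
qed

lemma p_mix_eq_kernel_integral:
  "p_mix \<theta> F x y = \<theta> * (\<integral>z. z\<^sup>2 * exp (- (z * (x + \<theta> * y))) \<partial>F)"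
  unfolding p_mix_def by (simp add: mult_ac)

lemma sparse_kernel_approximation:
  fixes F :: "real measure" and \<eta> :: real and K :: nat
  assumes F: "fin_borel_measure F" and supp: "emeasure F (- {m..M}) = 0"
    and m: "0 < m" "m \<le> M" and \<eta>: "0 < \<eta>"
  obtains S w \<phi> where "finite S" "S \<subseteq> {m..M}" "\<forall>s\<in>S. 0 < w s" "(\<Sum>s\<in>S. w s) = measure F UNIV"
    "real (card S) \<le> (4 * M / m + 1) * (K + 1) + 1"
    "\<phi> \<in> borel_measurable borel"
    "\<And>u. 0 \<le> u \<Longrightarrow>
      \<bar>(\<integral>z. z\<^sup>2 * exp (- (z * u)) \<partial>F) - (\<Sum>s\<in>S. w s * (s\<^sup>2 * exp (- (s * u))))\<bar> \<le> \<phi> u"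
    "has_bochner_integral lborel (\<lambda>u. indicator {0..} u * (u * \<phi> u))
      (measure F UNIV * (\<eta> + 4 * (real K + 2) / 4 ^ Suc K))"
proof -
  define \<mu> where "\<mu> = measure F UNIV"
  define c where "c = 2 * M / m\<^sup>2 + 2 * M\<^sup>2 / m ^ 3"
  have "0 < c"
    using m by (simp add: c_def add_pos_pos)
  then obtain S0 w0 where S0: "finite S0" "S0 \<subseteq> {m..M}" "\<forall>s\<in>S0. 0 \<le> w0 s" "(\<Sum>s\<in>S0. w0 s) = \<mu>"
    and grid: "\<And>g L. L-lipschitz_on {m..M} g \<Longrightarrow> g \<in> borel_measurable borel \<Longrightarrow>
      \<bar>(\<integral>z. g z \<partial>F) - (\<Sum>s\<in>S0. w0 s * g s)\<bar> \<le> \<eta> / c * L * \<mu>"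
    using grid_discretization[OF F supp, of "\<eta> / c"] \<eta> unfolding \<mu>_def by auto
  obtain S w where S: "S \<subseteq> S0" "\<forall>s\<in>S. 0 < w s" "(\<Sum>s\<in>S. w s) = (\<Sum>s\<in>S0. w0 s)"
    "real (card S) \<le> (4 * M / m + 1) * (K + 1) + 1"
    and matched: "\<And>u. 0 \<le> u \<Longrightarrow>
      \<bar>(\<Sum>s\<in>S0. w0 s * (s\<^sup>2 * exp (- (s * u)))) - (\<Sum>s\<in>S. w s * (s\<^sup>2 * exp (- (s * u))))\<bar>
      \<le> (\<Sum>s\<in>S0. w0 s * block_remainder K (geometric_anchor m s) u)
        + (\<Sum>s\<in>S. w s * block_remainder K (geometric_anchor m s) u)"
    using sparse_moment_matching[OF m S0(1,2,3)] by blast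
  define \<phi> where "\<phi> u = \<eta> / c * \<mu> * ((2 * M + M\<^sup>2 * u) * exp (- (m * u)))
    + (\<Sum>s\<in>S0. w0 s * block_remainder K (geometric_anchor m s) u)
    + (\<Sum>s\<in>S. w s * block_remainder K (geometric_anchor m s) u)" for u
  show thesis
  proof (rule that)
    show "finite S" "S \<subseteq> {m..M}" "\<forall>s\<in>S. 0 < w s" "(\<Sum>s\<in>S. w s) = measure F UNIV"
      "real (card S) \<le> (4 * M / m + 1) * (K + 1) + 1"
      using S S0 finite_subset by (auto simp: \<mu>_def)
    show "\<phi> \<in> borel_measurable borel"
      unfolding \<phi>_def block_remainder_def by measurable
  next
    fix u :: real assume u: "0 \<le> u"
    have "\<bar>(\<integral>z. z\<^sup>2 * exp (- (z * u)) \<partial>F) - (\<Sum>s\<in>S0. w0 s * (s\<^sup>2 * exp (- (s * u))))\<bar>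
        \<le> \<eta> / c * ((2 * M + M\<^sup>2 * u) * exp (- (m * u))) * \<mu>"
      using m u by (intro grid lipschitz_on_sq_exp) auto
    then show "\<bar>(\<integral>z. z\<^sup>2 * exp (- (z * u)) \<partial>F) - (\<Sum>s\<in>S. w s * (s\<^sup>2 * exp (- (s * u))))\<bar> \<le> \<phi> u"
      using matched[OF u] unfolding \<phi>_def by (simp add: mult_ac)
  next
    have "\<forall>s\<in>S0 \<union> S. 0 < geometric_anchor m s"
      using S(1) S0(2) geometric_anchor_bounds(1)[OF m(1)] by auto
    then have "has_bochner_integral lborel (\<lambda>u. indicator {0..} u * (u * \<phi> u))
      (\<eta> / c * \<mu> * c + ((\<Sum>s\<in>S0. w0 s) + (\<Sum>s\<in>S. w s)) * (2 * (real K + 2) / 4 ^ Suc K))"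
      unfolding \<phi>_def c_def
      by (rule has_bochner_integral_kernel_majorant[OF m(1) S0(1) finite_subset[OF S(1) S0(1)]])
    moreover have "\<eta> / c * \<mu> * c + ((\<Sum>s\<in>S0. w0 s) + (\<Sum>s\<in>S. w s)) * (2 * (real K + 2) / 4 ^ Suc K)
        = measure F UNIV * (\<eta> + 4 * (real K + 2) / 4 ^ Suc K)"
      using S(3) S0(4) \<open>0 < c\<close> by (simp add: \<mu>_def field_simps)
    ultimately show "has_bochner_integral lborel (\<lambda>u. indicator {0..} u * (u * \<phi> u))
      (measure F UNIV * (\<eta> + 4 * (real K + 2) / 4 ^ Suc K))"
      by (simp only:)
  qed
qed

lemma discrete_mixture_approximation:
  fixes F :: "real measure" and \<eta> \<theta> :: real and K :: nat
  assumes F: "fin_borel_measure F" and supp: "emeasure F (- {m..M}) = 0"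
    and m: "0 < m" "m \<le> M" and \<eta>: "0 < \<eta>" and \<theta>: "0 < \<theta>"
  obtains Fe S where "fin_borel_measure Fe" "finite S" "S \<subseteq> {m..M}" "emeasure Fe (- S) = 0"
    "\<forall>z\<in>S. 0 < emeasure Fe {z}" "measure Fe UNIV = measure F UNIV"
    "real (card S) \<le> (4 * M / m + 1) * (K + 1) + 1"
    "L1_dist (p_mix \<theta> F) (p_mix \<theta> Fe)
      \<le> ennreal (measure F UNIV * (\<eta> + 4 * (real K + 2) / 4 ^ Suc K))"
proof -
  obtain S w \<phi> where S: "finite S" "S \<subseteq> {m..M}" "\<forall>s\<in>S. 0 < w s" "(\<Sum>s\<in>S. w s) = measure F UNIV"
    "real (card S) \<le> (4 * M / m + 1) * (K + 1) + 1"
    and \<phi>: "\<phi> \<in> borel_measurable borel"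
      "\<And>u. 0 \<le> u \<Longrightarrow>
        \<bar>(\<integral>z. z\<^sup>2 * exp (- (z * u)) \<partial>F) - (\<Sum>s\<in>S. w s * (s\<^sup>2 * exp (- (s * u))))\<bar> \<le> \<phi> u"
      "has_bochner_integral lborel (\<lambda>u. indicator {0..} u * (u * \<phi> u))
        (measure F UNIV * (\<eta> + 4 * (real K + 2) / 4 ^ Suc K))"
    using sparse_kernel_approximation[OF F supp m \<eta>] by blast
  have w: "\<forall>s\<in>S. 0 \<le> w s"
    using S(3) by (auto intro: less_imp_le)
  define Fe where "Fe = discrete_measure S w"
  show thesis
  proof (rule that[of Fe S])
    show "fin_borel_measure Fe"
      unfolding Fe_def using S(1) w by (rule fin_borel_measure_discrete_measure)
    show "emeasure Fe (- S) = 0" "\<forall>z\<in>S. 0 < emeasure Fe {z}" "measure Fe UNIV = measure F UNIV"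
      using S(1,3,4) w by (auto simp: Fe_def emeasure_discrete_measure measure_def
        borel_closed finite_imp_closed sum_nonneg)
    have "\<bar>p_mix \<theta> F x y - p_mix \<theta> Fe x y\<bar> \<le> \<theta> * \<phi> (x + \<theta> * y)" if "0 < x" "0 < y" for x y
    proof -
      have "p_mix \<theta> Fe x y = \<theta> * (\<Sum>s\<in>S. w s * (s\<^sup>2 * exp (- (s * (x + \<theta> * y)))))"
        unfolding p_mix_eq_kernel_integral Fe_def using S(1) w by (simp add: integral_discrete_measure)
      then show ?thesis
        using \<phi>(2)[of "x + \<theta> * y"] \<theta> that
        by (simp add: p_mix_eq_kernel_integral abs_mult flip: right_diff_distrib)
    qed
    then show "L1_dist (p_mix \<theta> F) (p_mix \<theta> Fe)
      \<le> ennreal (measure F UNIV * (\<eta> + 4 * (real K + 2) / 4 ^ Suc K))"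
      using \<theta> \<phi>(1,3) by (intro L1_dist_le_first_moment) auto
  qed (use S in auto)
qed

lemma taylor_order_choice:
  fixes \<epsilon> :: real
  assumes \<epsilon>: "0 < \<epsilon>" "\<epsilon> < 1/2"
  defines "K \<equiv> nat \<lceil>2 * ln (8 / \<epsilon>)\<rceil>"
  shows "4 * (real K + 2) / 4 ^ Suc K \<le> \<epsilon> / 4" and "real K + 2 < 16 * ln (1 / \<epsilon>)"
proof -
  have ln2: "2/3 \<le> ln (2::real)" "ln (2::real) < 1"
    by (rule ln2_ge_two_thirds, rule ln_2_less_1)
  have "ln 2 < ln (1 / \<epsilon>)"
    using \<epsilon> by (intro ln_less_cancel_iff[THEN iffD2]) (auto simp: field_simps)
  have "0 < ln (8 / \<epsilon>)"
    using \<epsilon> by (intro ln_gt_zero) (simp add: field_simps)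
  have K: "2 * ln (8 / \<epsilon>) \<le> real K" "real K \<le> 2 * ln (8 / \<epsilon>) + 1"
    unfolding K_def using \<open>0 < ln (8 / \<epsilon>)\<close> by (simp_all add: real_nat_ceiling_ge of_nat_nat)
  have "ln (8 / \<epsilon>) \<le> 2 * ln (8 / \<epsilon>) * ln 2"
    using ln2 \<open>0 < ln (8 / \<epsilon>)\<close> by (simp add: mult_le_cancel_left1 mult.assoc)
  also have "\<dots> \<le> real K * ln 2"
    using K(1) ln2 by (intro mult_right_mono) auto
  finally have "8 / \<epsilon> \<le> 2 ^ K"
    using \<epsilon> by (simp add: ln_le_cancel_iff[symmetric] ln_realpow)
  have "Suc (Suc K) \<le> 2 ^ Suc K"
    using less_exp[of "Suc K"] by simp
  then have "real K + 2 \<le> 2 ^ Suc K"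
    by (metis of_nat_le_iff of_nat_numeral of_nat_power add_2_eq_Suc' of_nat_add)
  then have "4 * (real K + 2) / 4 ^ Suc K \<le> 4 * 2 ^ Suc K / 4 ^ Suc K"
    by (intro divide_right_mono) auto
  also have "\<dots> = 2 / 2 ^ K"
  proof -
    have "(4::real) ^ K = 2 ^ K * 2 ^ K"
      by (simp flip: power_mult_distrib)
    then show ?thesis
      by simp
  qed
  also have "\<dots> \<le> \<epsilon> / 4"
    using \<open>8 / \<epsilon> \<le> 2 ^ K\<close> \<epsilon> by (simp add: field_simps)
  finally show "4 * (real K + 2) / 4 ^ Suc K \<le> \<epsilon> / 4" .
  have "ln (8 / \<epsilon>) = 3 * ln 2 + ln (1 / \<epsilon>)"
    using \<epsilon> ln_realpow[of 2 3] by (simp add: ln_div)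
  then show "real K + 2 < 16 * ln (1 / \<epsilon>)"
    using K(2) ln2 \<open>ln 2 < ln (1 / \<epsilon>)\<close> by linarith
qed

lemma support_size_bound:
  fixes m M L :: real and K :: nat
  assumes n: "real n \<le> (4 * M / m + 1) * (K + 1) + 1" and m: "0 < m" "m < M" and K: "real K + 2 < 16 * L"
  shows "real n < 200 * (M / m) * L"
proof -
  have "1 < M / m"
    using m by simp
  moreover have "1 / 8 < L"
    using K of_nat_0_le_iff[of K] by linarith
  ultimately have "1 / 8 < M / m * L"
    using mult_strict_mono[of 1 "M / m" "1 / 8" L] by simp
  have "(4 * M / m + 1) * (K + 1) \<le> (5 * (M / m)) * (16 * L)"
    using \<open>1 < M / m\<close> K by (intro mult_mono) auto
  also have "\<dots> = 80 * (M / m * L)"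
    by simp
  finally have "(4 * M / m + 1) * (K + 1) \<le> 80 * (M / m * L)" .
  moreover have "\<And>A X :: real. real n \<le> A + 1 \<Longrightarrow> A \<le> 80 * X \<Longrightarrow> 1 / 8 < X \<Longrightarrow> real n < 200 * X"
    by linarith
  ultimately show ?thesis
    using n \<open>1 / 8 < M / m * L\<close> by (metis mult.assoc)
qed

theorem mainTheorem4:
  shows "\<exists>C::real. C > 0 \<and>
    (\<forall>(\<theta>::real) (m::real) (M::real) (F::real measure) (\<epsilon>::real).
       \<theta> > 0 \<longrightarrow> 0 < m \<longrightarrow> m < M \<longrightarrow>
       fin_borel_measure F \<longrightarrow> emeasure F (- {m..M}) = 0 \<longrightarrow> emeasure F UNIV > 0 \<longrightarrow>
       0 < \<epsilon> \<longrightarrow> \<epsilon> < 1/2 \<longrightarrow>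
       (\<exists>(Fe::real measure) (S::real set).
          fin_borel_measure Fe \<and> finite S \<and> S \<subseteq> {0<..} \<and>
          emeasure Fe (- S) = 0 \<and> (\<forall>z\<in>S. emeasure Fe {z} > 0) \<and>
          measure Fe UNIV = measure F UNIV \<and>
          real (card S) < C * (M / m) * ln (1 / \<epsilon>) \<and>
          L1_dist (p_mix \<theta> F) (p_mix \<theta> Fe) < ennreal (measure F UNIV * \<epsilon>)))"
proof (intro exI[of _ "200::real"] conjI allI impI)
  fix \<theta> m M \<epsilon> :: real and F :: "real measure"
  assume \<theta>: "\<theta> > 0" and m: "0 < m" "m < M" and F: "fin_borel_measure F"
    and supp: "emeasure F (- {m..M}) = 0" and F_pos: "emeasure F UNIV > 0" and \<epsilon>: "0 < \<epsilon>" "\<epsilon> < 1/2"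
  define K where "K = nat \<lceil>2 * ln (8 / \<epsilon>)\<rceil>"
  note K = taylor_order_choice[OF \<epsilon>, folded K_def]
  have "0 < measure F UNIV"
    using F F_pos by (simp add: fin_borel_measure_def finite_measure.emeasure_eq_measure)
  have "\<epsilon> / 4 + 4 * (real K + 2) / 4 ^ Suc K < \<epsilon>"
    using K(1) \<epsilon> by linarith
  have "0 < \<epsilon> / 4"
    using \<epsilon> by simp
  then obtain Fe S where Fe: "fin_borel_measure Fe" "finite S" "S \<subseteq> {m..M}" "emeasure Fe (- S) = 0"
      "\<forall>z\<in>S. 0 < emeasure Fe {z}" "measure Fe UNIV = measure F UNIV"
    and card: "real (card S) \<le> (4 * M / m + 1) * (K + 1) + 1"
    and L1: "L1_dist (p_mix \<theta> F) (p_mix \<theta> Fe) \<le> ennreal (measure F UNIV * (\<epsilon> / 4 + 4 * (real K + 2) / 4 ^ Suc K))"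
    by (rule discrete_mixture_approximation[OF F supp m(1) less_imp_le[OF m(2)] _ \<theta>])
  have "ennreal (measure F UNIV * (\<epsilon> / 4 + 4 * (real K + 2) / 4 ^ Suc K)) < ennreal (measure F UNIV * \<epsilon>)"
    using \<open>\<epsilon> / 4 + 4 * (real K + 2) / 4 ^ Suc K < \<epsilon>\<close> \<epsilon> \<open>0 < measure F UNIV\<close>
    by (intro ennreal_lessI mult_strict_left_mono) auto
  with L1 have "L1_dist (p_mix \<theta> F) (p_mix \<theta> Fe) < ennreal (measure F UNIV * \<epsilon>)"
    by (rule order_le_less_trans)
  moreover have "real (card S) < 200 * (M / m) * ln (1 / \<epsilon>)"
    using card m K(2) by (rule support_size_bound)
  moreover have "S \<subseteq> {0<..}"
    using Fe(3) m(1) by auto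
  ultimately show "\<exists>Fe S. fin_borel_measure Fe \<and> finite S \<and> S \<subseteq> {0<..} \<and> emeasure Fe (- S) = 0
      \<and> (\<forall>z\<in>S. emeasure Fe {z} > 0) \<and> measure Fe UNIV = measure F UNIV
      \<and> real (card S) < 200 * (M / m) * ln (1 / \<epsilon>)
      \<and> L1_dist (p_mix \<theta> F) (p_mix \<theta> Fe) < ennreal (measure F UNIV * \<epsilon>)"
    using Fe by blast
qed simp

end
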